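(* Let $\mathcal{E}_\theta$ ($\theta\in[0,\pi/2]$) be the qubit channel with Kraus operators $E_0=\sqrt{\eta_\theta}\,E$, $E_1=\sqrt{1-\eta_\theta}\,ZE$, where $E=\begin{pmatrix}\cos\theta&\sin\theta\\-\sin\theta&\cos\theta\end{pmatrix}$, $Z=\mathrm{diag}(1,-1)$ and $\eta_\theta\in[0,1]$ is arbitrary. For $n\ge1$ let $E_n$ be the set of $n$-bit strings of even Hamming weight, $w(i)$ the Hamming weight, and $|\Psi_n\rangle=2^{-(n-1)/2}\sum_{i\in E_n}(-1)^{w(i)/2}|i\rangle$. Apply $\mathcal{E}_\theta^{\otimes n}$ to $|\Psi_n\rangle\langle\Psi_n|$ and measure all $n$ qubits in the computational basis. Then the probability that the outcome string has even parity is exactly $\cos^2(n\theta)$. *)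

theory Defs
  imports Complex_Main
begin

text \<open>Computational basis of n qubits: bit strings = bool lists of length n
  (False = |0>, True = |1>). Operators / density matrices on n qubits are
  complex-valued functions of (row, column) bit strings.\<close>

definition bitstrings :: "nat \<Rightarrow> bool list set" where
  "bitstrings n = {i. length i = n}"

definition hweight :: "bool list \<Rightarrow> nat" where
  "hweight i = length (filter id i)"

definition even_strings :: "nat \<Rightarrow> bool list set" where
  "even_strings n = {i \<in> bitstrings n. even (hweight i)}"

definition Emat :: "real \<Rightarrow> bool \<Rightarrow> bool \<Rightarrow> complex" where
  "Emat \<theta> r c =
     (if \<not> r \<and> \<not> c then complex_of_real (cos \<theta>)
      else if \<not> r \<and> c then complex_of_real (sin \<theta>)
      else if r \<and> \<not> c then complex_of_real (- sin \<theta>)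
      else complex_of_real (cos \<theta>))"

definition Zmat :: "bool \<Rightarrow> bool \<Rightarrow> complex" where
  "Zmat r c = (if r \<noteq> c then 0 else if r then -1 else 1)"

definition matmul2 :: "(bool \<Rightarrow> bool \<Rightarrow> complex) \<Rightarrow> (bool \<Rightarrow> bool \<Rightarrow> complex) \<Rightarrow> bool \<Rightarrow> bool \<Rightarrow> complex" where
  "matmul2 A B r c = (\<Sum>k\<in>(UNIV::bool set). A r k * B k c)"

definition kraus :: "real \<Rightarrow> real \<Rightarrow> bool \<Rightarrow> bool \<Rightarrow> bool \<Rightarrow> complex" where
  "kraus \<eta> \<theta> k r c =
     (if \<not> k then complex_of_real (sqrt \<eta>) * Emat \<theta> r c
      else complex_of_real (sqrt (1 - \<eta>)) * matmul2 Zmat (Emat \<theta>) r c)"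

definition kraus_tensor :: "real \<Rightarrow> real \<Rightarrow> nat \<Rightarrow> bool list \<Rightarrow> bool list \<Rightarrow> bool list \<Rightarrow> complex" where
  "kraus_tensor \<eta> \<theta> n ks x i = (\<Prod>j<n. kraus \<eta> \<theta> (ks ! j) (x ! j) (i ! j))"

definition channel_n :: "real \<Rightarrow> real \<Rightarrow> nat \<Rightarrow> (bool list \<Rightarrow> bool list \<Rightarrow> complex) \<Rightarrow> bool list \<Rightarrow> bool list \<Rightarrow> complex" where
  "channel_n \<eta> \<theta> n \<rho> x y =
     (\<Sum>ks\<in>bitstrings n. \<Sum>i\<in>bitstrings n. \<Sum>i'\<in>bitstrings n.
        kraus_tensor \<eta> \<theta> n ks x i * \<rho> i i' * cnj (kraus_tensor \<eta> \<theta> n ks y i'))"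

definition Psi :: "nat \<Rightarrow> bool list \<Rightarrow> complex" where
  "Psi n i = (if i \<in> even_strings n
      then complex_of_real (2 powr (- (real n - 1) / 2) * (-1) ^ (hweight i div 2)) else 0)"

definition proj :: "(bool list \<Rightarrow> complex) \<Rightarrow> bool list \<Rightarrow> bool list \<Rightarrow> complex" where
  "proj \<psi> i i' = \<psi> i * cnj (\<psi> i')"

definition prob_even_parity :: "nat \<Rightarrow> (bool list \<Rightarrow> bool list \<Rightarrow> complex) \<Rightarrow> real" where
  "prob_even_parity n \<rho> = (\<Sum>x\<in>even_strings n. Re (\<rho> x x))"

end

theory Submission
  imports Defs
begin

text \<open>The vectors u = (1, i) and cnj u = (1, -i) are eigenvectors of the rotation E with
  eigenvalues e^(i\<theta>) and e^(-i\<theta>).  Since (i^w + (-i)^w) / 2 is (-1)^(w/2) for even w and 0 for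
  odd w, the state \<Psi>_n is proportional to u^\<otimes>n + (cnj u)^\<otimes>n, so E^\<otimes>n \<Psi>_n has amplitude
  2^(-(n-1)/2) (-1)^(w(x)/2) cos (n\<theta>) at every even string x.  Each Kraus operator is E preceded
  by a diagonal matrix (Z E is E with its second row negated) whose squared moduli sum to one
  over the two Kraus indices, so the channel output has the same diagonal as E^\<otimes>n \<Psi>_n.
  Summing 2^(-(n-1)) cos^2 (n\<theta>) over the 2^(n-1) even strings gives cos^2 (n\<theta>).\<close>

lemma bitstrings_0: "bitstrings 0 = {[]}"
  by (auto simp: bitstrings_def)

lemma bitstrings_Suc:
  "bitstrings (Suc n) = Cons False ` bitstrings n \<union> Cons True ` bitstrings n"
proof
  show "bitstrings (Suc n) \<subseteq> Cons False ` bitstrings n \<union> Cons True ` bitstrings n"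
  proof
    fix xs assume "xs \<in> bitstrings (Suc n)"
    then obtain b l where "xs = b # l" "length l = n"
      by (auto simp: bitstrings_def length_Suc_conv)
    then show "xs \<in> Cons False ` bitstrings n \<union> Cons True ` bitstrings n"
      by (cases b) (auto simp: bitstrings_def)
  qed
qed (auto simp: bitstrings_def)

lemma finite_bitstrings [simp]: "finite (bitstrings n)"
  by (induction n) (auto simp: bitstrings_0 bitstrings_Suc)

lemma sum_bitstrings_Suc:
  "(\<Sum>x\<in>bitstrings (Suc n). g x) =
     (\<Sum>l\<in>bitstrings n. g (False # l)) + (\<Sum>l\<in>bitstrings n. g (True # l))"
  unfolding bitstrings_Suc
  by (subst sum.union_disjoint) (auto simp: sum.reindex)

lemma sum_prod_bitstrings:
  fixes f :: "nat \<Rightarrow> bool \<Rightarrow> 'a::comm_semiring_1"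
  shows "(\<Sum>i\<in>bitstrings n. \<Prod>j<n. f j (i ! j)) = (\<Prod>j<n. f j False + f j True)"
proof (induction n arbitrary: f)
  case 0
  then show ?case by (simp add: bitstrings_0)
next
  case (Suc n)
  have "(\<Sum>i\<in>bitstrings (Suc n). \<Prod>j<Suc n. f j (i ! j)) =
    f 0 False * (\<Sum>l\<in>bitstrings n. \<Prod>j<n. f (Suc j) (l ! j)) +
    f 0 True * (\<Sum>l\<in>bitstrings n. \<Prod>j<n. f (Suc j) (l ! j))"
    by (simp add: sum_bitstrings_Suc prod.lessThan_Suc_shift sum_distrib_left
        del: prod.lessThan_Suc)
  also have "\<dots> = (\<Prod>j<Suc n. f j False + f j True)"
    using Suc[of "\<lambda>j. f (Suc j)"]
    by (simp add: prod.lessThan_Suc_shift distrib_right del: prod.lessThan_Suc)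
  finally show ?case .
qed

lemma card_bitstrings: "card (bitstrings n) = 2 ^ n"
  using sum_prod_bitstrings[of "\<lambda>_ _. 1::nat" n]
  by (simp only: prod.neutral_const sum_constant one_add_one prod_constant) simp

lemma hweight_Cons: "hweight (b # l) = (if b then Suc (hweight l) else hweight l)"
  by (simp add: hweight_def)

lemma card_bitstrings_Suc_parity:
  "card {i \<in> bitstrings (Suc m). even (hweight i) = b} = 2 ^ m"
proof -
  have "card {i \<in> bitstrings (Suc m). even (hweight i) = b} = card (
     Cons False ` {l \<in> bitstrings m. even (hweight l) = b} \<union>
     Cons True ` {l \<in> bitstrings m. even (hweight l) = (\<not> b)})"
    by (rule arg_cong[where f = card]) (auto simp: bitstrings_Suc hweight_Cons)
  also have "\<dots> = card {l \<in> bitstrings m. even (hweight l) = b} +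
      card {l \<in> bitstrings m. even (hweight l) = (\<not> b)}"
    by (subst card_Un_disjoint) (auto simp: card_image)
  also have "\<dots> = card ({l \<in> bitstrings m. even (hweight l) = b} \<union>
      {l \<in> bitstrings m. even (hweight l) = (\<not> b)})"
    by (subst card_Un_disjoint) auto
  also have "{l \<in> bitstrings m. even (hweight l) = b} \<union>
      {l \<in> bitstrings m. even (hweight l) = (\<not> b)} = bitstrings m"
    by auto
  finally show ?thesis by (simp add: card_bitstrings)
qed

lemma card_even_strings: "n \<ge> 1 \<Longrightarrow> card (even_strings n) = 2 ^ (n - 1)"
  using card_bitstrings_Suc_parity[of "n - 1" True] by (simp add: even_strings_def)

lemma prod_nth_eq_power_hweight:
  fixes f :: "bool \<Rightarrow> 'a::comm_monoid_mult"
  assumes "f False = 1" and "length i = n"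
  shows "(\<Prod>j<n. f (i ! j)) = f True ^ hweight i"
  using assms(2)
proof (induction i arbitrary: n)
  case Nil
  then show ?case by (simp add: hweight_def)
next
  case (Cons b l)
  then show ?case
    using assms(1) by (auto simp: prod.lessThan_Suc_shift hweight_Cons simp del: prod.lessThan_Suc)
qed

lemma imaginary_unit_powers_average:
  "(if even w then complex_of_real ((-1) ^ (w div 2)) else 0) = (\<i> ^ w + (- \<i>) ^ w) / 2"
proof (cases "even w")
  case True
  then obtain m where "w = 2 * m" by blast
  then show ?thesis by (simp add: power_mult)
next
  case False
  then obtain m where "w = 2 * m + 1" using oddE by blast
  then show ?thesis by (simp add: power_add power_mult)
qed

lemma powr_neg_half_squared: "((2::real) powr (- real m / 2))\<^sup>2 = 1 / 2 ^ m"
proof -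
  have "((2::real) powr (- real m / 2))\<^sup>2 = 2 powr (- real m)"
    by (simp add: power2_eq_square flip: powr_add)
  also have "\<dots> = 1 / 2 ^ m"
    by (simp add: powr_minus powr_realpow divide_inverse)
  finally show ?thesis .
qed

definition rot_eigvec :: "bool \<Rightarrow> complex" where
  "rot_eigvec b = (if b then \<i> else 1)"

definition tensor_power :: "nat \<Rightarrow> (bool \<Rightarrow> complex) \<Rightarrow> bool list \<Rightarrow> complex" where
  "tensor_power n v i = (\<Prod>j<n. v (i ! j))"

definition rot_tensor_apply :: "real \<Rightarrow> nat \<Rightarrow> (bool list \<Rightarrow> complex) \<Rightarrow> bool list \<Rightarrow> complex" where
  "rot_tensor_apply \<theta> n \<psi> x = (\<Sum>i\<in>bitstrings n. (\<Prod>j<n. Emat \<theta> (x ! j) (i ! j)) * \<psi> i)"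

lemma Emat_rot_eigvec:
  "Emat \<theta> r False * rot_eigvec False + Emat \<theta> r True * rot_eigvec True = cis \<theta> * rot_eigvec r"
  by (cases r) (auto simp: Emat_def rot_eigvec_def complex_eq_iff)

lemma Emat_cnj_rot_eigvec:
  "Emat \<theta> r False * cnj (rot_eigvec False) + Emat \<theta> r True * cnj (rot_eigvec True) =
     cis (- \<theta>) * cnj (rot_eigvec r)"
  by (cases r) (auto simp: Emat_def rot_eigvec_def complex_eq_iff)

lemma rot_tensor_apply_tensor_power:
  "rot_tensor_apply \<theta> n (tensor_power n v) x =
     (\<Prod>j<n. Emat \<theta> (x ! j) False * v False + Emat \<theta> (x ! j) True * v True)"
  unfolding rot_tensor_apply_def tensor_power_def prod.distrib[symmetric]
  by (rule sum_prod_bitstrings)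

lemma rot_tensor_apply_scaled_sum:
  "rot_tensor_apply \<theta> n (\<lambda>i. c * (\<phi> i + \<psi> i)) x =
     c * (rot_tensor_apply \<theta> n \<phi> x + rot_tensor_apply \<theta> n \<psi> x)"
  by (simp add: rot_tensor_apply_def algebra_simps sum.distrib sum_distrib_left)

lemma tensor_power_rot_eigvec:
  "length i = n \<Longrightarrow> tensor_power n rot_eigvec i = \<i> ^ hweight i"
  unfolding tensor_power_def by (subst prod_nth_eq_power_hweight) (simp_all add: rot_eigvec_def)

lemma tensor_power_cnj_rot_eigvec:
  "length i = n \<Longrightarrow> tensor_power n (\<lambda>b. cnj (rot_eigvec b)) i = (- \<i>) ^ hweight i"
  unfolding tensor_power_def by (subst prod_nth_eq_power_hweight) (simp_all add: rot_eigvec_def)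

lemma Psi_eq_rot_eigvec_superposition:
  assumes "i \<in> bitstrings n"
  shows "Psi n i = complex_of_real (2 powr (- (real n - 1) / 2)) / 2 *
     (tensor_power n rot_eigvec i + tensor_power n (\<lambda>b. cnj (rot_eigvec b)) i)"
proof -
  have "length i = n" using assms by (simp add: bitstrings_def)
  then show ?thesis
    using assms imaginary_unit_powers_average[of "hweight i"]
    by (simp add: Psi_def even_strings_def tensor_power_rot_eigvec tensor_power_cnj_rot_eigvec)
qed

lemma rot_tensor_apply_Psi:
  assumes x: "x \<in> even_strings n"
  shows "rot_tensor_apply \<theta> n (Psi n) x =
    complex_of_real (2 powr (- (real n - 1) / 2) * (-1) ^ (hweight x div 2) * cos (real n * \<theta>))"
proof -
  define c where "c = complex_of_real (2 powr (- (real n - 1) / 2)) / 2"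
  have "length x = n" and "even (hweight x)"
    using x by (auto simp: even_strings_def bitstrings_def)
  then obtain m where w: "hweight x = 2 * m" and len: "length x = n" by blast
  have "rot_tensor_apply \<theta> n (Psi n) x = rot_tensor_apply \<theta> n
      (\<lambda>i. c * (tensor_power n rot_eigvec i + tensor_power n (\<lambda>b. cnj (rot_eigvec b)) i)) x"
    unfolding rot_tensor_apply_def c_def by (intro sum.cong refl) (simp add: Psi_eq_rot_eigvec_superposition)
  also have "\<dots> = c * ((\<Prod>j<n. cis \<theta> * rot_eigvec (x ! j)) +
      (\<Prod>j<n. cis (- \<theta>) * cnj (rot_eigvec (x ! j))))"
    by (simp only: rot_tensor_apply_scaled_sum rot_tensor_apply_tensor_power
        Emat_rot_eigvec Emat_cnj_rot_eigvec)
  also have "\<dots> = c * (cis \<theta> ^ n * \<i> ^ hweight x + cis (- \<theta>) ^ n * (- \<i>) ^ hweight x)"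
    using tensor_power_rot_eigvec[OF len] tensor_power_cnj_rot_eigvec[OF len]
    by (simp add: prod.distrib tensor_power_def)
  also have "\<dots> = c * (-1) ^ m * (cis (real n * \<theta>) + cis (- (real n * \<theta>)))"
    unfolding w power_mult DeMoivre by (simp add: algebra_simps)
  also have "cis (real n * \<theta>) + cis (- (real n * \<theta>)) = 2 * complex_of_real (cos (real n * \<theta>))"
    by (simp add: complex_eq_iff)
  finally show ?thesis by (simp add: c_def w)
qed

definition kraus_diag :: "real \<Rightarrow> bool \<Rightarrow> bool \<Rightarrow> complex" where
  "kraus_diag \<eta> k r =
     (if k then complex_of_real (sqrt (1 - \<eta>)) * Zmat r r else complex_of_real (sqrt \<eta>))"

lemma kraus_eq_kraus_diag_Emat: "kraus \<eta> \<theta> k r c = kraus_diag \<eta> k r * Emat \<theta> r c"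
  by (cases r) (simp_all add: kraus_def kraus_diag_def matmul2_def UNIV_bool Zmat_def)

lemma kraus_tensor_factor:
  "kraus_tensor \<eta> \<theta> n ks x i =
     (\<Prod>j<n. kraus_diag \<eta> (ks ! j) (x ! j)) * (\<Prod>j<n. Emat \<theta> (x ! j) (i ! j))"
  by (simp add: kraus_tensor_def kraus_eq_kraus_diag_Emat prod.distrib)

lemma kraus_diag_completeness:
  assumes "0 \<le> \<eta>" "\<eta> \<le> 1"
  shows "kraus_diag \<eta> False r * cnj (kraus_diag \<eta> False r) +
         kraus_diag \<eta> True r * cnj (kraus_diag \<eta> True r) = 1"
proof -
  have "complex_of_real (sqrt \<eta>) * complex_of_real (sqrt \<eta>) = complex_of_real \<eta>"
       "complex_of_real (sqrt (1 - \<eta>)) * complex_of_real (sqrt (1 - \<eta>)) = complex_of_real (1 - \<eta>)"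
    using assms by (simp_all flip: of_real_mult)
  then show ?thesis by (cases r) (auto simp: kraus_diag_def Zmat_def)
qed

lemma kraus_diag_tensor_completeness:
  assumes "0 \<le> \<eta>" "\<eta> \<le> 1"
  shows "(\<Sum>ks\<in>bitstrings n. (\<Prod>j<n. kraus_diag \<eta> (ks ! j) (x ! j)) *
            cnj (\<Prod>j<n. kraus_diag \<eta> (ks ! j) (x ! j))) = 1"
proof -
  have "(\<Sum>ks\<in>bitstrings n. (\<Prod>j<n. kraus_diag \<eta> (ks ! j) (x ! j)) *
          cnj (\<Prod>j<n. kraus_diag \<eta> (ks ! j) (x ! j))) =
        (\<Sum>ks\<in>bitstrings n. \<Prod>j<n. kraus_diag \<eta> (ks ! j) (x ! j) * cnj (kraus_diag \<eta> (ks ! j) (x ! j)))"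
    by (simp add: prod.distrib)
  also have "\<dots> = 1"
    by (subst sum_prod_bitstrings) (simp add: kraus_diag_completeness[OF assms])
  finally show ?thesis .
qed

lemma channel_n_proj_diag:
  assumes "0 \<le> \<eta>" "\<eta> \<le> 1"
  shows "channel_n \<eta> \<theta> n (proj \<psi>) x x =
    rot_tensor_apply \<theta> n \<psi> x * cnj (rot_tensor_apply \<theta> n \<psi> x)"
proof -
  define a where "a ks = (\<Prod>j<n. kraus_diag \<eta> (ks ! j) (x ! j))" for ks
  define T where "T i = (\<Prod>j<n. Emat \<theta> (x ! j) (i ! j))" for i
  define S where "S = rot_tensor_apply \<theta> n \<psi> x"
  have "(\<Sum>i\<in>bitstrings n. \<Sum>i'\<in>bitstrings n.
          kraus_tensor \<eta> \<theta> n ks x i * proj \<psi> i i' * cnj (kraus_tensor \<eta> \<theta> n ks x i')) =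
        (a ks * cnj (a ks)) * (S * cnj S)" for ks
  proof -
    have "(a ks * cnj (a ks)) * (S * cnj S) = (a ks * cnj (a ks)) *
        (\<Sum>i\<in>bitstrings n. \<Sum>i'\<in>bitstrings n. (T i * \<psi> i) * cnj (T i' * \<psi> i'))"
      unfolding S_def rot_tensor_apply_def T_def cnj_sum sum_product ..
    also have "\<dots> = (\<Sum>i\<in>bitstrings n. \<Sum>i'\<in>bitstrings n.
        kraus_tensor \<eta> \<theta> n ks x i * proj \<psi> i i' * cnj (kraus_tensor \<eta> \<theta> n ks x i'))"
      unfolding sum_distrib_left kraus_tensor_factor proj_def a_def[symmetric] T_def[symmetric]
      by (intro sum.cong refl) (simp only: complex_cnj_mult mult_ac)
    finally show ?thesis by simp
  qed
  then have "channel_n \<eta> \<theta> n (proj \<psi>) x x = (\<Sum>ks\<in>bitstrings n. a ks * cnj (a ks)) * (S * cnj S)"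
    by (simp add: channel_n_def sum_distrib_right)
  then show ?thesis
    unfolding a_def kraus_diag_tensor_completeness[OF assms] S_def by simp
qed

theorem mainTheorem4:
  fixes \<theta> \<eta> :: real and n :: nat
  assumes "0 \<le> \<theta>" "\<theta> \<le> pi / 2" "0 \<le> \<eta>" "\<eta> \<le> 1" "n \<ge> 1"
  shows "prob_even_parity n (channel_n \<eta> \<theta> n (proj (Psi n))) = (cos (real n * \<theta>))\<^sup>2"
proof -
  define c where "c = (2::real) powr (- (real n - 1) / 2)"
  have c2: "c\<^sup>2 = 1 / 2 ^ (n - 1)"
    using powr_neg_half_squared[of "n - 1"] assms(5) by (simp add: c_def)
  have "Re (channel_n \<eta> \<theta> n (proj (Psi n)) x x) = c\<^sup>2 * (cos (real n * \<theta>))\<^sup>2"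
    if "x \<in> even_strings n" for x
    unfolding channel_n_proj_diag[OF assms(3,4)] rot_tensor_apply_Psi[OF that] c_def[symmetric]
    by (simp add: power2_eq_square algebra_simps flip: power_add)
  then have "prob_even_parity n (channel_n \<eta> \<theta> n (proj (Psi n))) =
      real (card (even_strings n)) * (c\<^sup>2 * (cos (real n * \<theta>))\<^sup>2)"
    by (simp add: prob_even_parity_def)
  also have "\<dots> = (cos (real n * \<theta>))\<^sup>2"
    using card_even_strings[OF assms(5)] c2 by simp
  finally show ?thesis .
qed

end
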